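(* Let $d\ge1$, $n\ge1$, $R>0$, $0<r_-<r_+$. Let $\psi$ be an increasing $C^2$ function on $]0,+\infty[$ with $\psi''\le0$ and $\liminf_{\rho\to+\infty}\rho\,\psi'(\rho)>0$. Let $\mathcal{D}\subset\mathbb{R}^{n(d+1)}$ be the set of $\mathbf{x}=(x_1,\breve{x}_1,\ldots,x_n,\breve{x}_n)$ ($x_i\in\mathbb{R}^d$, $\breve{x}_i\in\mathbb{R}$) with $|x_i|>R+\breve{x}_i$ and $r_-<\breve{x}_i<r_+$ for all $i$, and $|x_i-x_j|>\breve{x}_i+\breve{x}_j$ for all $i\neq j$. For $\theta>0$ small enough that $\int_{\mathcal{D}}e^{-\frac{1}{\theta^2}\sum_{i}\psi(|y_i|)}d\mathbf{y}<\infty$ (which holds for all sufficiently small $\theta$), let $$\mu_\theta(d\mathbf{x})=\frac{\mathbf{1}_{\mathcal{D}}(\mathbf{x})e^{-\frac{1}{\theta^2}\sum_{i=1}^n\psi(|x_i|)}d\mathbf{x}}{\int_{\mathcal{D}}e^{-\frac{1}{\theta^2}\sum_{i=1}^n\psi(|y_i|)}d\mathbf{y}}.$$ For $\varepsilon>0$ let $$A_\varepsilon=\{\mathbf{x}\in\mathcal{D}:\ \exists\mathbf{y}\in\mathcal{D}\ \exists k\le n \text{ such that } y_i=x_i \text{ for all } i\neq k \text{ and } |y_k|<|x_k|-\varepsilon\}.$$ Then for every $\varepsilon>0$, $\lim_{\theta\to0}\mu_\theta(A_\varepsilon)=0$.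
   Context: $d\mathbf{x}$ denotes Lebesgue measure on $\mathbb{R}^{n(d+1)}$; $|\cdot|$ is the Euclidean norm. In the condition $y_i=x_i$ only the position coordinates $x_i\in\mathbb{R}^d$ are compared (radii $\breve{y}_i$ are unconstrained beyond $\mathbf{y}\in\mathcal{D}$). The measure $\mu_\theta$ is the equilibrium (time-reversible) distribution of a system of $n$ spherical particles with positions $x_i$ and radii $\breve{x}_i$ around a planet $B(0,R)$ at temperature $\theta$. *)

theory Defs
  imports "HOL-Analysis.Analysis"
begin

text \<open>A configuration of n particles in R^d: the index type 'n (finite) labels the
particles, each particle i is a pair (x_i, radius_i) :: real^'d \<times> real.\<close>

type_synonym ('d, 'n) config = "((real^'d) \<times> real)^'n"

definition pos :: "('d::finite, 'n::finite) config \<Rightarrow> 'n \<Rightarrow> real^'d" where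
  "pos x i = fst (x $ i)"

definition rad :: "('d::finite, 'n::finite) config \<Rightarrow> 'n \<Rightarrow> real" where
  "rad x i = snd (x $ i)"

definition confD :: "real \<Rightarrow> real \<Rightarrow> real \<Rightarrow> ('d::finite, 'n::finite) config set" where
  "confD R rm rp = {x. (\<forall>i. norm (pos x i) > R + rad x i \<and> rm < rad x i \<and> rad x i < rp)
                      \<and> (\<forall>i j. i \<noteq> j \<longrightarrow> norm (pos x i - pos x j) > rad x i + rad x j)}"

definition weight :: "(real \<Rightarrow> real) \<Rightarrow> real \<Rightarrow> ('d::finite, 'n::finite) config \<Rightarrow> real" where
  "weight \<psi> \<theta> x = exp (- (1 / \<theta>\<^sup>2) * (\<Sum>i\<in>UNIV. \<psi> (norm (pos x i))))"

definition wint :: "(real \<Rightarrow> real) \<Rightarrow> real \<Rightarrow> ('d::finite, 'n::finite) config set \<Rightarrow> ennreal" where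
  "wint \<psi> \<theta> S = (\<integral>\<^sup>+ y. indicator S y * ennreal (weight \<psi> \<theta> y) \<partial>lborel)"

text \<open>The equilibrium measure mu_theta of a set A (meaningful when wint over D is finite).\<close>
definition mu :: "(real \<Rightarrow> real) \<Rightarrow> real \<Rightarrow> real \<Rightarrow> real \<Rightarrow> real
                   \<Rightarrow> ('d::finite, 'n::finite) config set \<Rightarrow> real" where
  "mu \<psi> R rm rp \<theta> A =
     enn2real (wint \<psi> \<theta> (A \<inter> confD R rm rp)) / enn2real (wint \<psi> \<theta> (confD R rm rp :: ('d, 'n) config set))"

definition Aeps :: "real \<Rightarrow> real \<Rightarrow> real \<Rightarrow> real \<Rightarrow> ('d::finite, 'n::finite) config set" where
  "Aeps R rm rp \<epsilon> = {x \<in> confD R rm rp. \<exists>y \<in> confD R rm rp. \<exists>k.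
        (\<forall>i. i \<noteq> k \<longrightarrow> pos y i = pos x i) \<and> norm (pos y k) < norm (pos x k) - \<epsilon>}"

end

theory Submission
  imports Defs "HOL-Real_Asymp.Real_Asymp"
begin

text \<open>
  In a configuration of
  \<open>A\<^sub>\<epsilon>\<close> one particle can be moved more than \<open>\<epsilon>\<close> closer to the planet without leaving \<open>D\<close>;
  as \<open>\<psi>\<close> is concave with \<open>\<psi>' > 0\<close>, this lowers \<open>V\<close> by a fixed amount, so \<open>V \<ge> inf\<^sub>D V + \<eta>\<close>
  on \<open>A\<^sub>\<epsilon>\<close> for some \<open>\<eta> > 0\<close>. Laplace's principle then gives \<open>\<mu>\<^sub>\<theta>(A\<^sub>\<epsilon>) = O(exp (- \<eta> / (2 \<theta>\<^sup>2)))\<close>: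
  the mass of \<open>A\<^sub>\<epsilon>\<close> is controlled by its mass at a fixed temperature \<open>\<theta>\<^sub>1\<close>, and a small
  ball on which \<open>V < inf\<^sub>D V + \<eta> / 2\<close> bounds the normaliser from below. Since \<open>\<psi>\<close> grows at
  least like \<open>c ln \<rho>\<close>, the density decays like an arbitrarily high power of \<open>\<bar>x\<bar>\<close> once \<open>\<theta>\<close>
  is small, which makes the normaliser finite.
\<close>

lemma nn_integral_lborel_finite_if_decay:
  fixes f :: "'a::euclidean_space \<Rightarrow> ennreal"
  assumes K: "0 \<le> K"
    and decay: "\<And>x. f x \<le> ennreal (K / (1 + norm x) ^ (DIM('a) + 2))"
  shows "(\<integral>\<^sup>+ x. f x \<partial>lborel) < \<infinity>"
proof -
  define N where "N = DIM('a)"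
  define S where "S = (\<lambda>k::nat. {x::'a. real k \<le> norm x \<and> norm x < real k + 1})"
  define b where "b = (\<lambda>k::nat. K / (real k + 1) ^ (N + 2))"
  have S_sets: "S k \<in> sets lborel" for k
  proof -
    have "S k = {x. real k \<le> norm x} \<inter> {x. norm x < real k + 1}" by (auto simp: S_def)
    moreover have "closed {x::'a. real k \<le> norm x}" by (intro closed_Collect_le continuous_intros)
    moreover have "open {x::'a. norm x < real k + 1}" by (intro open_Collect_less continuous_intros)
    ultimately show ?thesis by auto
  qed
  have f_le_shells: "f x \<le> (\<Sum>k. ennreal (b k) * indicator (S k) x)" for x
  proof -
    define k0 where "k0 = nat \<lfloor>norm x\<rfloor>"
    have in_S: "x \<in> S k \<longleftrightarrow> k = k0" for k
      unfolding S_def k0_def by (auto; linarith)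
    have "(\<Sum>k. ennreal (b k) * indicator (S k) x) = (\<Sum>k\<in>{k0}. ennreal (b k) * indicator (S k) x)"
      by (rule suminf_finite) (auto simp: in_S)
    also have "\<dots> = ennreal (b k0)" using in_S by simp
    finally have shells: "(\<Sum>k. ennreal (b k) * indicator (S k) x) = ennreal (b k0)" .
    have "real k0 + 1 \<le> 1 + norm x" unfolding k0_def using of_nat_floor[of "norm x"] by simp
    then have "K / (1 + norm x) ^ (N + 2) \<le> b k0"
      unfolding b_def using K by (intro divide_left_mono power_mono mult_pos_pos) auto
    then show ?thesis using decay[of x] unfolding shells N_def by (meson ennreal_leI order_trans)
  qed
  have "(\<integral>\<^sup>+ x. f x \<partial>lborel) \<le> (\<integral>\<^sup>+ x. (\<Sum>k. ennreal (b k) * indicator (S k) x) \<partial>lborel)"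
    by (intro nn_integral_mono f_le_shells)
  also have "\<dots> = (\<Sum>k. ennreal (b k) * emeasure lborel (S k))"
    using S_sets by (simp add: nn_integral_suminf nn_integral_cmult_indicator)
  also have "\<dots> \<le> (\<Sum>k. ennreal (K * unit_ball_vol N / (real k + 1) ^ 2))"
  proof (intro suminf_le)
    fix k
    have "S k \<subseteq> cball 0 (real k + 1)" by (auto simp: S_def)
    then have "emeasure lborel (S k) \<le> ennreal (unit_ball_vol N * (real k + 1) ^ N)"
      using emeasure_mono[of "S k" "cball 0 (real k + 1)" lborel] by (simp add: emeasure_cball N_def)
    then have "ennreal (b k) * emeasure lborel (S k) \<le> ennreal (b k) * ennreal (unit_ball_vol N * (real k + 1) ^ N)"
      by (rule mult_left_mono) simp
    also have "\<dots> = ennreal (b k * (unit_ball_vol N * (real k + 1) ^ N))"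
      by (rule ennreal_mult[symmetric]) (use K in \<open>auto simp: b_def\<close>)
    also have "b k * (unit_ball_vol N * (real k + 1) ^ N) = K * unit_ball_vol N / (real k + 1) ^ 2"
    proof -
      have p: "(real k + 1) ^ (N + 2) = (real k + 1) ^ N * (real k + 1) ^ 2" by (simp only: power_add)
      have "(real k + 1) ^ N > 0" by simp
      then show ?thesis unfolding b_def p by (simp add: field_simps)
    qed
    finally show "ennreal (b k) * emeasure lborel (S k) \<le> ennreal (K * unit_ball_vol N / (real k + 1) ^ 2)" .
  qed auto
  also have "\<dots> < \<infinity>"
  proof -
    have "summable (\<lambda>k. inverse (real (Suc k) ^ 2))"
      using inverse_power_summable[of 2, where 'a=real] by (subst summable_Suc_iff) simp
    then have "summable (\<lambda>k. K * unit_ball_vol N / (real k + 1) ^ 2)"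
      using summable_mult[of _ "K * unit_ball_vol N"] by (simp add: divide_inverse add.commute)
    then show ?thesis
      using K by (simp add: less_top ennreal_suminf_neq_top)
  qed
  finally show ?thesis .
qed

definition gibbs_mass :: "('a::euclidean_space \<Rightarrow> real) \<Rightarrow> real \<Rightarrow> 'a set \<Rightarrow> ennreal" where
  "gibbs_mass V \<theta> S = (\<integral>\<^sup>+ y. indicator S y * ennreal (exp (- (1 / \<theta>\<^sup>2) * V y)) \<partial>lborel)"

lemma gibbs_density_borel_measurable:
  fixes V :: "'a::euclidean_space \<Rightarrow> real"
  assumes "open D" "continuous_on D V"
  shows "(\<lambda>x. indicator D x * ennreal (exp (- (1 / \<theta>\<^sup>2) * V x))) \<in> borel_measurable lborel"
proof -
  have "continuous_on D (\<lambda>x. exp (- (1 / \<theta>\<^sup>2) * V x))"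
    using assms(2) by (intro continuous_intros)
  then have "(\<lambda>x. indicator D x *\<^sub>R exp (- (1 / \<theta>\<^sup>2) * V x)) \<in> borel_measurable borel"
    using assms(1) by (intro borel_measurable_continuous_on_indicator borel_open)
  moreover have "(\<lambda>x. indicator D x * ennreal (exp (- (1 / \<theta>\<^sup>2) * V x)))
      = (\<lambda>x. ennreal (indicator D x *\<^sub>R exp (- (1 / \<theta>\<^sup>2) * V x)))"
    by (auto simp: indicator_def)
  ultimately show ?thesis by simp
qed

lemma gibbs_mass_le_higher_temperature:
  fixes V :: "'a::euclidean_space \<Rightarrow> real"
  assumes D: "open D" "continuous_on D V"
    and S: "S \<subseteq> D" "\<And>x. x \<in> S \<Longrightarrow> a \<le> V x"
    and \<theta>: "0 < \<theta>" "\<theta> \<le> \<theta>\<^sub>1"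
  shows "gibbs_mass V \<theta> S \<le> ennreal (exp (a / \<theta>\<^sub>1\<^sup>2 - a / \<theta>\<^sup>2)) * gibbs_mass V \<theta>\<^sub>1 D"
proof -
  define C where "C = exp (a / \<theta>\<^sub>1\<^sup>2 - a / \<theta>\<^sup>2)"
  have inv_le: "1 / \<theta>\<^sub>1\<^sup>2 \<le> 1 / \<theta>\<^sup>2" using \<theta> by (intro divide_left_mono power_mono) auto
  have pointwise: "indicator S x * ennreal (exp (- (1 / \<theta>\<^sup>2) * V x))
      \<le> ennreal C * (indicator D x * ennreal (exp (- (1 / \<theta>\<^sub>1\<^sup>2) * V x)))" for x
  proof (cases "x \<in> S")
    case True
    have "(V x - a) * (1 / \<theta>\<^sub>1\<^sup>2) \<le> (V x - a) * (1 / \<theta>\<^sup>2)"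
      using S(2)[OF True] inv_le by (intro mult_left_mono) auto
    then have "exp (- (1 / \<theta>\<^sup>2) * V x) \<le> C * exp (- (1 / \<theta>\<^sub>1\<^sup>2) * V x)"
      unfolding C_def exp_add[symmetric] by (simp add: algebra_simps diff_divide_distrib)
    then show ?thesis using True S(1) by (auto simp: ennreal_mult'[symmetric] C_def ennreal_leI)
  qed simp
  have "gibbs_mass V \<theta> S \<le> (\<integral>\<^sup>+ x. ennreal C * (indicator D x * ennreal (exp (- (1 / \<theta>\<^sub>1\<^sup>2) * V x))) \<partial>lborel)"
    unfolding gibbs_mass_def by (intro nn_integral_mono pointwise)
  also have "\<dots> = ennreal C * gibbs_mass V \<theta>\<^sub>1 D"
    unfolding gibbs_mass_def by (intro nn_integral_cmult gibbs_density_borel_measurable D)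
  finally show ?thesis by (simp add: C_def)
qed

lemma gibbs_mass_finite_at_lower_temperature:
  fixes V :: "'a::euclidean_space \<Rightarrow> real"
  assumes "open D" "continuous_on D V" "bdd_below (V ` D)"
    and "gibbs_mass V \<theta>\<^sub>1 D < \<infinity>" "0 < \<theta>" "\<theta> \<le> \<theta>\<^sub>1"
  shows "gibbs_mass V \<theta> D < \<infinity>"
proof -
  obtain a where "\<And>x. x \<in> D \<Longrightarrow> a \<le> V x" using assms(3) by (auto simp: bdd_below_def)
  then have "gibbs_mass V \<theta> D \<le> ennreal (exp (a / \<theta>\<^sub>1\<^sup>2 - a / \<theta>\<^sup>2)) * gibbs_mass V \<theta>\<^sub>1 D"
    using assms by (intro gibbs_mass_le_higher_temperature) auto
  also have "\<dots> < \<infinity>" using assms(4) by (simp add: ennreal_mult_less_top)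
  finally show ?thesis .
qed

lemma gibbs_mass_lower_bound:
  fixes V :: "'a::euclidean_space \<Rightarrow> real"
  assumes "open D" "continuous_on D V" "x\<^sub>0 \<in> D" "V x\<^sub>0 < b"
  obtains v where "0 < v" "\<And>\<theta>. ennreal (v * exp (- b / \<theta>\<^sup>2)) \<le> gibbs_mass V \<theta> D"
proof -
  have "open (D \<inter> V -` {..<b})" using assms by (intro continuous_open_preimage) auto
  moreover have "x\<^sub>0 \<in> D \<inter> V -` {..<b}" using assms by simp
  ultimately obtain \<delta> where \<delta>: "0 < \<delta>" "ball x\<^sub>0 \<delta> \<subseteq> D \<inter> V -` {..<b}"
    by (meson open_contains_ball)
  define v where "v = unit_ball_vol DIM('a) * \<delta> ^ DIM('a)"
  show ?thesis
  proof (rule that)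
    show "0 < v" using \<delta> by (simp add: v_def)
    fix \<theta>
    have pointwise: "ennreal (exp (- b / \<theta>\<^sup>2)) * indicator (ball x\<^sub>0 \<delta>) x
        \<le> indicator D x * ennreal (exp (- (1 / \<theta>\<^sup>2) * V x))" for x
    proof (cases "x \<in> ball x\<^sub>0 \<delta>")
      case True
      then have "x \<in> D" "V x \<le> b" using \<delta>(2) by auto
      moreover from \<open>V x \<le> b\<close> have "- b / \<theta>\<^sup>2 \<le> - (1 / \<theta>\<^sup>2) * V x"
        by (simp add: divide_right_mono)
      ultimately show ?thesis using True by (simp add: ennreal_leI)
    qed simp
    have "(\<integral>\<^sup>+ x. ennreal (exp (- b / \<theta>\<^sup>2)) * indicator (ball x\<^sub>0 \<delta>) x \<partial>lborel)
        = ennreal (exp (- b / \<theta>\<^sup>2)) * emeasure lborel (ball x\<^sub>0 \<delta>)"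
      by (rule nn_integral_cmult_indicator) simp
    then have "ennreal (v * exp (- b / \<theta>\<^sup>2))
        = (\<integral>\<^sup>+ x. ennreal (exp (- b / \<theta>\<^sup>2)) * indicator (ball x\<^sub>0 \<delta>) x \<partial>lborel)"
      using \<delta> by (simp add: emeasure_ball v_def ennreal_mult mult.commute)
    also have "\<dots> \<le> gibbs_mass V \<theta> D"
      unfolding gibbs_mass_def by (intro nn_integral_mono pointwise)
    finally show "ennreal (v * exp (- b / \<theta>\<^sup>2)) \<le> gibbs_mass V \<theta> D" .
  qed
qed

lemma gibbs_ratio_le_exp:
  fixes V :: "'a::euclidean_space \<Rightarrow> real"
  assumes D: "open D" "D \<noteq> {}" "continuous_on D V"
    and \<theta>\<^sub>1: "\<And>\<theta>. 0 < \<theta> \<Longrightarrow> \<theta> \<le> \<theta>\<^sub>1 \<Longrightarrow> gibbs_mass V \<theta> D < \<infinity>" "0 < \<theta>\<^sub>1"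
    and A: "A \<subseteq> D" "0 < \<eta>" "\<And>x. x \<in> A \<Longrightarrow> Inf (V ` D) + \<eta> \<le> V x"
  obtains C where "\<And>\<theta>. 0 < \<theta> \<Longrightarrow> \<theta> \<le> \<theta>\<^sub>1 \<Longrightarrow>
    enn2real (gibbs_mass V \<theta> A) / enn2real (gibbs_mass V \<theta> D) \<le> C * exp (- (\<eta> / 2) / \<theta>\<^sup>2)"
proof -
  define a where "a = Inf (V ` D) + \<eta>"
  define b where "b = Inf (V ` D) + \<eta> / 2"
  obtain x\<^sub>0 where "x\<^sub>0 \<in> D" "V x\<^sub>0 < b"
    using cInf_lessD[of "V ` D" b] D(2) A(2) by (auto simp: b_def)
  then obtain v where v: "0 < v" "\<And>\<theta>. ennreal (v * exp (- b / \<theta>\<^sup>2)) \<le> gibbs_mass V \<theta> D"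
    using gibbs_mass_lower_bound D by metis
  define J where "J = enn2real (gibbs_mass V \<theta>\<^sub>1 D)"
  have J: "gibbs_mass V \<theta>\<^sub>1 D = ennreal J" using \<theta>\<^sub>1 by (simp add: J_def less_top)
  show ?thesis
  proof (rule that[of "exp (a / \<theta>\<^sub>1\<^sup>2) * J / v"])
    fix \<theta> :: real assume \<theta>: "0 < \<theta>" "\<theta> \<le> \<theta>\<^sub>1"
    have "gibbs_mass V \<theta> A \<le> ennreal (exp (a / \<theta>\<^sub>1\<^sup>2 - a / \<theta>\<^sup>2) * J)"
      using gibbs_mass_le_higher_temperature[OF D(1,3) A(1) _ \<theta>, of a] A(3)
      by (simp add: a_def J ennreal_mult')
    then have num: "enn2real (gibbs_mass V \<theta> A) \<le> exp (a / \<theta>\<^sub>1\<^sup>2 - a / \<theta>\<^sup>2) * J"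
      by (simp add: enn2real_leI J_def)
    have "gibbs_mass V \<theta> D < \<infinity>" using \<theta>\<^sub>1(1) \<theta> .
    then have den: "v * exp (- b / \<theta>\<^sup>2) \<le> enn2real (gibbs_mass V \<theta> D)"
      using v enn2real_mono[OF v(2)[of \<theta>]] by simp
    have "enn2real (gibbs_mass V \<theta> A) / enn2real (gibbs_mass V \<theta> D)
        \<le> exp (a / \<theta>\<^sub>1\<^sup>2 - a / \<theta>\<^sup>2) * J / (v * exp (- b / \<theta>\<^sup>2))"
      using num den v by (intro frac_le) (auto simp: J_def)
    also have "\<dots> = exp (a / \<theta>\<^sub>1\<^sup>2) * J / v * exp (- (\<eta> / 2) / \<theta>\<^sup>2)"
    proof -
      have "a = \<eta> / 2 + b" by (simp add: a_def b_def)
      then have "a / \<theta>\<^sup>2 = (\<eta> / 2) / \<theta>\<^sup>2 + b / \<theta>\<^sup>2"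
        by (simp only: add_divide_distrib)
      then have "a / \<theta>\<^sub>1\<^sup>2 - a / \<theta>\<^sup>2 = a / \<theta>\<^sub>1\<^sup>2 + - (\<eta> / 2) / \<theta>\<^sup>2 + - b / \<theta>\<^sup>2"
        by linarith
      then have split: "exp (a / \<theta>\<^sub>1\<^sup>2 - a / \<theta>\<^sup>2) = exp (a / \<theta>\<^sub>1\<^sup>2) * exp (- (\<eta> / 2) / \<theta>\<^sup>2) * exp (- b / \<theta>\<^sup>2)"
        by (simp only: exp_add)
      have cancel: "P * X * Y * J / (v * Y) = P * J / v * X" if "Y \<noteq> 0" for P X Y :: real
        using v(1) that by (simp add: field_simps)
      show ?thesis unfolding split by (rule cancel) simp
    qed
    finally show "enn2real (gibbs_mass V \<theta> A) / enn2real (gibbs_mass V \<theta> D)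
        \<le> exp (a / \<theta>\<^sub>1\<^sup>2) * J / v * exp (- (\<eta> / 2) / \<theta>\<^sup>2)" .
  qed
qed

lemma gibbs_ratio_tendsto_zero:
  fixes V :: "'a::euclidean_space \<Rightarrow> real"
  assumes D: "open D" "D \<noteq> {}" "continuous_on D V"
    and finite: "\<forall>\<^sub>F \<theta> in at_right 0. gibbs_mass V \<theta> D < \<infinity>"
    and A: "A \<subseteq> D" "0 < \<eta>" "\<And>x. x \<in> A \<Longrightarrow> Inf (V ` D) + \<eta> \<le> V x"
  shows "((\<lambda>\<theta>. enn2real (gibbs_mass V \<theta> A) / enn2real (gibbs_mass V \<theta> D)) \<longlongrightarrow> 0) (at_right 0)"
proof -
  obtain b where "0 < b" and finite_below: "\<And>\<theta>. 0 < \<theta> \<Longrightarrow> \<theta> < b \<Longrightarrow> gibbs_mass V \<theta> D < \<infinity>"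
    using finite by (auto simp: eventually_at_right_field)
  then obtain C where C: "\<And>\<theta>. 0 < \<theta> \<Longrightarrow> \<theta> \<le> b / 2 \<Longrightarrow>
      enn2real (gibbs_mass V \<theta> A) / enn2real (gibbs_mass V \<theta> D) \<le> C * exp (- (\<eta> / 2) / \<theta>\<^sup>2)"
    using gibbs_ratio_le_exp[OF D _ _ A, of "b / 2"] by fastforce
  show ?thesis
  proof (rule tendsto_sandwich[where f = "\<lambda>_. 0" and h = "\<lambda>\<theta>. C * exp (- (\<eta> / 2) / \<theta>\<^sup>2)"])
    have "\<forall>\<^sub>F \<theta> in at_right 0. 0 < \<theta> \<and> \<theta> \<le> b / 2"
      using \<open>0 < b\<close> by (auto simp: eventually_at_right_field intro!: exI[of _ "b / 2"])
    then show "\<forall>\<^sub>F \<theta> in at_right 0.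
        enn2real (gibbs_mass V \<theta> A) / enn2real (gibbs_mass V \<theta> D) \<le> C * exp (- (\<eta> / 2) / \<theta>\<^sup>2)"
      by eventually_elim (use C in auto)
    show "((\<lambda>\<theta>. C * exp (- (\<eta> / 2) / \<theta>\<^sup>2)) \<longlongrightarrow> 0) (at_right 0)"
      using A(2) by real_asymp
  qed simp_all
qed

lemma secant_ge_deriv_right:
  fixes f f' :: "real \<Rightarrow> real"
  assumes deriv: "\<And>x. 0 < x \<Longrightarrow> (f has_real_derivative f' x) (at x)"
    and antimono: "\<And>s t. 0 < s \<Longrightarrow> s \<le> t \<Longrightarrow> f' t \<le> f' s"
    and "0 < a" "a \<le> b"
  shows "(b - a) * f' b \<le> f b - f a"
proof -
  have "f a - a * f' b \<le> f b - b * f' b"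
  proof (rule deriv_nonneg_imp_mono[OF _ _ \<open>a \<le> b\<close>])
    fix x assume x: "x \<in> {a..b}"
    then show "((\<lambda>x. f x - x * f' b) has_real_derivative f' x - f' b) (at x)"
      using \<open>0 < a\<close> by (auto intro!: derivative_eq_intros deriv)
    show "0 \<le> f' x - f' b" using antimono[of x b] x \<open>0 < a\<close> by auto
  qed
  then show ?thesis by (simp add: algebra_simps)
qed

lemma log_growth_if_Liminf_pos:
  fixes f f' :: "real \<Rightarrow> real"
  assumes deriv: "\<And>x. 0 < x \<Longrightarrow> (f has_real_derivative f' x) (at x)"
    and Liminf: "0 < Liminf at_top (\<lambda>x. ereal (x * f' x))"
  obtains c x\<^sub>0 where "0 < c" "0 < x\<^sub>0" "\<And>x. x\<^sub>0 \<le> x \<Longrightarrow> c \<le> x * f' x"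
    "\<And>x. x\<^sub>0 \<le> x \<Longrightarrow> f x\<^sub>0 + c * ln (x / x\<^sub>0) \<le> f x"
proof -
  obtain c where c: "0 < ereal c" "ereal c < Liminf at_top (\<lambda>x. ereal (x * f' x))"
    using ereal_dense2[OF Liminf] by blast
  then obtain r where r: "\<And>x. r \<le> x \<Longrightarrow> c < x * f' x"
    using less_LiminfD[OF c(2)] by (auto simp: eventually_at_top_linorder)
  define x\<^sub>0 where "x\<^sub>0 = max r 1"
  have x\<^sub>0: "0 < x\<^sub>0" "\<And>x. x\<^sub>0 \<le> x \<Longrightarrow> c \<le> x * f' x"
    using r by (auto simp: x\<^sub>0_def less_imp_le)
  have "f x\<^sub>0 + c * ln (x / x\<^sub>0) \<le> f x" if "x\<^sub>0 \<le> x" for x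
  proof -
    have "f x\<^sub>0 - c * ln x\<^sub>0 \<le> f x - c * ln x"
    proof (rule deriv_nonneg_imp_mono[OF _ _ that])
      fix y assume y: "y \<in> {x\<^sub>0..x}"
      then show "((\<lambda>y. f y - c * ln y) has_real_derivative f' y - c * (1 / y)) (at y)"
        using x\<^sub>0(1) by (auto intro!: derivative_eq_intros deriv)
      show "0 \<le> f' y - c * (1 / y)"
        using x\<^sub>0 y by (auto simp: field_simps mult.commute)
    qed
    then show ?thesis using x\<^sub>0(1) that by (simp add: ln_div right_diff_distrib)
  qed
  with x\<^sub>0 c(1) that show ?thesis by auto
qed

definition potential :: "(real \<Rightarrow> real) \<Rightarrow> ('d::finite, 'n::finite) config \<Rightarrow> real" where
  "potential \<psi> x = (\<Sum>i\<in>UNIV. \<psi> (norm (pos x i)))"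

lemma wint_eq_gibbs_mass: "wint \<psi> \<theta> S = gibbs_mass (potential \<psi>) \<theta> S"
  by (simp add: wint_def gibbs_mass_def weight_def potential_def)

lemma potential_split:
  "potential \<psi> x = \<psi> (norm (pos x k)) + (\<Sum>i\<in>UNIV - {k}. \<psi> (norm (pos x i)))"
  unfolding potential_def by (simp add: sum.remove)

lemma norm_pos_gt_if_confD:
  assumes "x \<in> confD R rm rp" "0 \<le> rm"
  shows "R < norm (pos x i)"
proof -
  have "R + rad x i < norm (pos x i)" "rm < rad x i" using assms(1) by (auto simp: confD_def)
  then show ?thesis using assms(2) by linarith
qed

lemma open_confD: "open (confD R rm rp :: ('d::finite, 'n::finite) config set)"
proof -
  have pos: "continuous_on UNIV (\<lambda>x::('d, 'n) config. pos x i)" for i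
    unfolding pos_def by (intro continuous_intros)
  have rad: "continuous_on UNIV (\<lambda>x::('d, 'n) config. rad x i)" for i
    unfolding rad_def by (intro continuous_intros)
  have "confD R rm rp = (\<Inter>i. {x::('d, 'n) config. R + rad x i < norm (pos x i)}
        \<inter> {x. rm < rad x i} \<inter> {x. rad x i < rp})
      \<inter> (\<Inter>i. \<Inter>j. if i = j then UNIV else {x::('d, 'n) config. rad x i + rad x j < norm (pos x i - pos x j)})"
    unfolding confD_def by (auto split: if_splits)
  moreover have "open {x::('d, 'n) config. R + rad x i < norm (pos x i)}"
    "open {x::('d, 'n) config. rm < rad x i}" "open {x::('d, 'n) config. rad x i < rp}"
    "open {x::('d, 'n) config. rad x i + rad x j < norm (pos x i - pos x j)}" for i j
    by (intro open_Collect_less continuous_intros pos rad)+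
  ultimately show ?thesis by (auto intro!: open_Int open_INT)
qed

lemma confD_nonempty:
  assumes "rm < rp"
  shows "confD R rm rp \<noteq> ({} :: ('d::finite, 'n::finite) config set)"
proof -
  obtain e :: "real^'d" where e: "norm e = 1" using vector_choose_size[of 1] by auto
  define L where "L = \<bar>R\<bar> + 2 * \<bar>rp\<bar> + 1"
  define r where "r = (rm + rp) / 2"
  define x :: "('d, 'n) config" where "x = (\<chi> i. ((real (to_nat i + 1) * L) *\<^sub>R e, r))"
  have pos: "pos x i = (real (to_nat i + 1) * L) *\<^sub>R e" for i by (simp add: x_def pos_def)
  have rad: "rad x i = r" for i by (simp add: x_def rad_def)
  have "r < rp" using assms by (simp add: r_def)
  then have "0 < L \<and> R + r < L \<and> 2 * r < L"
    unfolding L_def using abs_ge_self[of R] abs_ge_self[of rp] abs_ge_zero[of R] by linarith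
  then have L: "0 < L" "R + r < L" "2 * r < L" by auto
  have "R + rad x i < norm (pos x i)" for i
  proof -
    have "norm (pos x i) = real (to_nat i + 1) * L" using L e by (simp add: pos)
    moreover have "L \<le> real (to_nat i + 1) * L" using L by simp
    ultimately show ?thesis using L by (simp only: rad)
  qed
  moreover have "rad x i + rad x j < norm (pos x i - pos x j)" if "i \<noteq> j" for i j
  proof -
    have "to_nat i \<noteq> to_nat j" using that by simp
    then have "1 \<le> \<bar>real (to_nat i) - real (to_nat j)\<bar>" by linarith
    then have "L \<le> \<bar>real (to_nat i) - real (to_nat j)\<bar> * L" using L by simp
    moreover have "pos x i - pos x j = ((real (to_nat i) - real (to_nat j)) * L) *\<^sub>R e"
      by (simp add: pos algebra_simps)
    then have "norm (pos x i - pos x j) = \<bar>real (to_nat i) - real (to_nat j)\<bar> * L"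
      using L e by (simp add: abs_mult)
    ultimately show ?thesis using L by (simp only: rad)
  qed
  ultimately have "x \<in> confD R rm rp" using assms by (auto simp: confD_def rad r_def)
  then show ?thesis by blast
qed

lemma continuous_on_potential:
  assumes "continuous_on {0<..} \<psi>" "0 \<le> R" "0 \<le> rm"
  shows "continuous_on (confD R rm rp :: ('d::finite, 'n::finite) config set) (potential \<psi>)"
proof -
  have "continuous_on (confD R rm rp) (\<lambda>x::('d, 'n) config. \<psi> (norm (pos x i)))" for i
  proof (rule continuous_on_compose2[OF assms(1)])
    show "continuous_on (confD R rm rp) (\<lambda>x::('d, 'n) config. norm (pos x i))"
      unfolding pos_def by (intro continuous_intros)
    show "(\<lambda>x::('d, 'n) config. norm (pos x i)) ` confD R rm rp \<subseteq> {0<..}"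
    proof (rule image_subsetI)
      fix x :: "('d, 'n) config" assume "x \<in> confD R rm rp"
      then have "R < norm (pos x i)" using assms(3) by (rule norm_pos_gt_if_confD)
      then show "norm (pos x i) \<in> {0<..}" using assms(2) by auto
    qed
  qed
  then show ?thesis unfolding potential_def[abs_def] by (intro continuous_on_sum) auto
qed

lemma potential_ge_single:
  fixes x :: "('d::finite, 'n::finite) config"
  assumes mono: "mono_on {0<..} \<psi>" and "0 < R" "0 \<le> rm" "x \<in> confD R rm rp"
  shows "\<psi> (norm (pos x k)) + (real CARD('n) - 1) * \<psi> R \<le> potential \<psi> x"
proof -
  have "\<psi> R \<le> \<psi> (norm (pos x i))" for i
    using norm_pos_gt_if_confD[OF assms(4,3), of i] assms(2) by (intro mono_onD[OF mono]) auto
  then have "real (card (UNIV - {k} :: 'n set)) * \<psi> R \<le> (\<Sum>i\<in>UNIV - {k}. \<psi> (norm (pos x i)))"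
    by (intro sum_bounded_below) auto
  moreover have "real (card (UNIV - {k} :: 'n set)) = real CARD('n) - 1"
    by (simp add: card_Diff_singleton of_nat_diff Suc_leI)
  ultimately show ?thesis by (simp add: potential_split[of _ _ k])
qed

lemma potential_ge:
  fixes x :: "('d::finite, 'n::finite) config"
  assumes mono: "mono_on {0<..} \<psi>" and "0 < R" "0 \<le> rm" "x \<in> confD R rm rp"
  shows "real CARD('n) * \<psi> R \<le> potential \<psi> x"
proof -
  have "\<psi> R \<le> \<psi> (norm (pos x k))" for k
    using norm_pos_gt_if_confD[OF assms(4,3), of k] assms(2) by (intro mono_onD[OF mono]) auto
  from this[of undefined] show ?thesis using potential_ge_single[OF assms, of undefined]
    by (simp add: algebra_simps)
qed

lemma exists_pos_norm_ge:
  fixes x :: "('d::finite, 'n::finite) config"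
  assumes "x \<in> confD R rm rp" "0 \<le> rm"
  shows "\<exists>i. norm x / real CARD('n) - rp \<le> norm (pos x i)"
proof (rule ccontr)
  assume far: "\<not> ?thesis"
  then have "norm (x $ i) < norm x / real CARD('n)" for i
  proof -
    have "norm (x $ i) \<le> norm (pos x i) + norm (rad x i)"
      unfolding pos_def rad_def by (metis norm_Pair_le prod.collapse)
    moreover have "rm < rad x i" "rad x i < rp" using assms(1) by (auto simp: confD_def)
    then have "norm (rad x i) < rp" using assms(2) by simp
    moreover have "norm (pos x i) < norm x / real CARD('n) - rp" using far by (simp add: not_le)
    ultimately show ?thesis by linarith
  qed
  then have "(\<Sum>i\<in>UNIV. norm (x $ i)) < (\<Sum>i\<in>(UNIV::'n set). norm x / real CARD('n))"
    by (intro sum_strict_mono) auto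
  moreover have "norm x \<le> (\<Sum>i\<in>UNIV. norm (x $ i))"
    unfolding norm_vec_def by (rule L2_set_le_sum) auto
  ultimately show False by simp
qed

lemma weight_eq_exp_potential: "weight \<psi> \<theta> x = exp (- (1 / \<theta>\<^sup>2) * potential \<psi> x)"
  by (simp add: weight_def potential_def)

lemma weight_le_if_norm_large:
  fixes \<psi> :: "real \<Rightarrow> real"
  assumes mono: "mono_on {0<..} \<psi>" and R: "0 < R" and rm: "0 \<le> rm"
    and c: "0 < c" and x\<^sub>0: "0 < x\<^sub>0"
    and growth: "\<And>t. x\<^sub>0 \<le> t \<Longrightarrow> \<psi> x\<^sub>0 + c * ln (t / x\<^sub>0) \<le> \<psi> t"
    and \<theta>: "1 / \<theta>\<^sup>2 = real p / c"
    and x: "x \<in> (confD R rm rp :: ('d::finite, 'n::finite) config set)"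
    and large: "2 * real CARD('n) * (\<bar>rp\<bar> + x\<^sub>0) + 1 \<le> norm x"
  shows "weight \<psi> \<theta> x \<le> exp (- (p / c) * (\<psi> x\<^sub>0 + (real CARD('n) - 1) * \<psi> R))
    * (4 * real CARD('n) * x\<^sub>0 / (1 + norm x)) ^ p"
proof -
  define q where "q = real CARD('n)"
  define s where "s = norm x"
  define t where "t = s / q - rp"
  have q: "1 \<le> q" by (simp add: q_def)
  have "0 \<le> 2 * q * (\<bar>rp\<bar> + x\<^sub>0)" using q x\<^sub>0 by simp
  then have s: "1 \<le> s" using large by (simp add: q_def s_def)
  have "2 * (\<bar>rp\<bar> + x\<^sub>0) \<le> s / q" using large q by (simp add: q_def s_def field_simps)
  then have t: "x\<^sub>0 \<le> t" "s / (2 * q) \<le> t" "0 < t"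
    using abs_ge_self[of rp] abs_ge_zero[of rp] x\<^sub>0 by (simp_all add: t_def)
  obtain i where "t \<le> norm (pos x i)"
    using exists_pos_norm_ge[OF x rm] by (auto simp: t_def s_def q_def)
  then have "\<psi> t \<le> \<psi> (norm (pos x i))" using t(3) by (intro mono_onD[OF mono]) auto
  then have "\<psi> x\<^sub>0 + c * ln (t / x\<^sub>0) + (q - 1) * \<psi> R \<le> potential \<psi> x"
    using growth[OF t(1)] potential_ge_single[OF mono R rm x, of i] by (simp add: q_def)
  then have "real p / c * (\<psi> x\<^sub>0 + c * ln (t / x\<^sub>0) + (q - 1) * \<psi> R) \<le> real p / c * potential \<psi> x"
    using c by (intro mult_left_mono) auto
  then have "weight \<psi> \<theta> x \<le> exp (- (p / c) * (\<psi> x\<^sub>0 + c * ln (t / x\<^sub>0) + (q - 1) * \<psi> R))"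
    unfolding weight_eq_exp_potential \<theta> by simp
  also have "\<dots> = exp (- (p / c) * (\<psi> x\<^sub>0 + (q - 1) * \<psi> R)) * (x\<^sub>0 / t) ^ p"
  proof -
    have "- (p / c) * (\<psi> x\<^sub>0 + c * ln (t / x\<^sub>0) + (q - 1) * \<psi> R)
        = - (p / c) * (\<psi> x\<^sub>0 + (q - 1) * \<psi> R) + real p * ln (x\<^sub>0 / t)"
      using c x\<^sub>0 t(3) by (simp add: ln_div field_simps)
    moreover have "exp (real p * ln (x\<^sub>0 / t)) = (x\<^sub>0 / t) ^ p"
      using x\<^sub>0 t(3) by (simp add: exp_of_nat_mult)
    ultimately show ?thesis by (simp only: exp_add)
  qed
  also have "\<dots> \<le> exp (- (p / c) * (\<psi> x\<^sub>0 + (q - 1) * \<psi> R)) * (4 * q * x\<^sub>0 / (1 + s)) ^ p"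
  proof -
    have "x\<^sub>0 / t \<le> x\<^sub>0 / (s / (2 * q))"
      using t x\<^sub>0 q s by (intro divide_left_mono) auto
    also have "\<dots> = 4 * q * x\<^sub>0 / (2 * s)" using q by simp
    also have "\<dots> \<le> 4 * q * x\<^sub>0 / (1 + s)"
      using s q x\<^sub>0 by (intro divide_left_mono) auto
    finally show ?thesis using x\<^sub>0 t(3) by (intro mult_left_mono power_mono) auto
  qed
  finally show ?thesis by (simp add: q_def s_def)
qed

lemma weight_polynomial_decay:
  fixes \<psi> :: "real \<Rightarrow> real"
  assumes mono: "mono_on {0<..} \<psi>" and R: "0 < R" and rm: "0 \<le> rm"
    and c: "0 < c" and x\<^sub>0: "0 < x\<^sub>0"
    and growth: "\<And>t. x\<^sub>0 \<le> t \<Longrightarrow> \<psi> x\<^sub>0 + c * ln (t / x\<^sub>0) \<le> \<psi> t"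
    and \<theta>: "1 / \<theta>\<^sup>2 = real p / c"
  obtains K where "0 \<le> K"
    "\<And>x. x \<in> (confD R rm rp :: ('d::finite, 'n::finite) config set) \<Longrightarrow> weight \<psi> \<theta> x \<le> K / (1 + norm x) ^ p"
proof -
  define q where "q = real CARD('n)"
  define T where "T = 2 * q * (\<bar>rp\<bar> + x\<^sub>0) + 1"
  define E\<^sub>0 where "E\<^sub>0 = exp (- (p / c) * (q * \<psi> R))"
  define E\<^sub>1 where "E\<^sub>1 = exp (- (p / c) * (\<psi> x\<^sub>0 + (q - 1) * \<psi> R))"
  have T: "1 \<le> T" using x\<^sub>0 by (simp add: T_def q_def)
  have K: "0 \<le> E\<^sub>0 * (T + 1) ^ p" "0 \<le> E\<^sub>1 * (4 * q * x\<^sub>0) ^ p"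
    using x\<^sub>0 T by (simp_all add: E\<^sub>0_def E\<^sub>1_def q_def)
  show ?thesis
  proof (rule that[of "E\<^sub>0 * (T + 1) ^ p + E\<^sub>1 * (4 * q * x\<^sub>0) ^ p"])
    show "0 \<le> E\<^sub>0 * (T + 1) ^ p + E\<^sub>1 * (4 * q * x\<^sub>0) ^ p" using K by simp
    fix x :: "('d, 'n) config" assume x: "x \<in> confD R rm rp"
    show "weight \<psi> \<theta> x \<le> (E\<^sub>0 * (T + 1) ^ p + E\<^sub>1 * (4 * q * x\<^sub>0) ^ p) / (1 + norm x) ^ p"
    proof (cases "norm x < T")
      case True
      have "real p / c * (q * \<psi> R) \<le> real p / c * potential \<psi> x"
        using potential_ge[OF mono R rm x] c by (intro mult_left_mono) (simp_all add: q_def)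
      then have "weight \<psi> \<theta> x \<le> E\<^sub>0" unfolding weight_eq_exp_potential \<theta> E\<^sub>0_def by simp
      also have "\<dots> \<le> E\<^sub>0 * (T + 1) ^ p / (1 + norm x) ^ p"
      proof -
        have "(1 + norm x) ^ p \<le> (T + 1) ^ p" using True by (intro power_mono) auto
        moreover have "0 < (1 + norm x) ^ p" by (simp add: add_pos_nonneg)
        ultimately show ?thesis by (simp add: E\<^sub>0_def le_divide_eq)
      qed
      also have "\<dots> \<le> (E\<^sub>0 * (T + 1) ^ p + E\<^sub>1 * (4 * q * x\<^sub>0) ^ p) / (1 + norm x) ^ p"
        using K by (intro divide_right_mono) simp_all
      finally show ?thesis .
    next
      case False
      then have "weight \<psi> \<theta> x \<le> E\<^sub>1 * (4 * q * x\<^sub>0 / (1 + norm x)) ^ p"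
        using weight_le_if_norm_large[OF mono R rm c x\<^sub>0 growth \<theta> x] by (simp add: E\<^sub>1_def T_def q_def)
      also have "\<dots> \<le> (E\<^sub>0 * (T + 1) ^ p + E\<^sub>1 * (4 * q * x\<^sub>0) ^ p) / (1 + norm x) ^ p"
        using K by (simp add: power_divide add_divide_distrib)
      finally show ?thesis .
    qed
  qed
qed

lemma gibbs_mass_confD_finite:
  fixes \<psi> :: "real \<Rightarrow> real"
  assumes mono: "mono_on {0<..} \<psi>" and cont: "continuous_on {0<..} \<psi>"
    and R: "0 < R" and rm: "0 \<le> rm" and c: "0 < c" and x\<^sub>0: "0 < x\<^sub>0"
    and growth: "\<And>t. x\<^sub>0 \<le> t \<Longrightarrow> \<psi> x\<^sub>0 + c * ln (t / x\<^sub>0) \<le> \<psi> t"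
  shows "\<forall>\<^sub>F \<theta> in at_right 0.
    gibbs_mass (potential \<psi>) \<theta> (confD R rm rp :: ('d::finite, 'n::finite) config set) < \<infinity>"
proof -
  let ?D = "confD R rm rp :: ('d, 'n) config set"
  define N where "N = DIM(('d, 'n) config)"
  \<comment> \<open>at this temperature the density is \<open>O((1 + \<bar>x\<bar>) powr -(N + 2))\<close>, integrable on \<open>\<real>\<^sup>N\<close>\<close>
  define \<theta>\<^sub>1 where "\<theta>\<^sub>1 = sqrt (c / real (N + 2))"
  have "0 < \<theta>\<^sub>1" "1 / \<theta>\<^sub>1\<^sup>2 = real (N + 2) / c" using c by (simp_all add: \<theta>\<^sub>1_def)
  then obtain K where K: "0 \<le> K" "\<And>x. x \<in> ?D \<Longrightarrow> weight \<psi> \<theta>\<^sub>1 x \<le> K / (1 + norm x) ^ (N + 2)"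
    using weight_polynomial_decay[OF mono R rm c x\<^sub>0 growth] by metis
  have finite: "gibbs_mass (potential \<psi>) \<theta>\<^sub>1 ?D < \<infinity>"
    unfolding wint_eq_gibbs_mass[symmetric] wint_def
  proof (rule nn_integral_lborel_finite_if_decay[OF K(1)])
    fix x :: "('d, 'n) config"
    show "indicator ?D x * ennreal (weight \<psi> \<theta>\<^sub>1 x) \<le> ennreal (K / (1 + norm x) ^ (DIM(('d, 'n) config) + 2))"
      using K(2)[of x] by (cases "x \<in> ?D") (auto simp: N_def intro: ennreal_leI)
  qed
  have bdd: "bdd_below (potential \<psi> ` ?D)"
    using potential_ge[OF mono R rm] by (auto simp: bdd_below_def)
  have "gibbs_mass (potential \<psi>) \<theta> ?D < \<infinity>" if "0 < \<theta>" "\<theta> \<le> \<theta>\<^sub>1" for \<theta>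
    using open_confD continuous_on_potential[OF cont less_imp_le[OF R] rm] bdd finite that
    by (rule gibbs_mass_finite_at_lower_temperature)
  then show ?thesis
    using \<open>0 < \<theta>\<^sub>1\<close> by (auto simp: eventually_at_right_field intro!: exI[of _ \<theta>\<^sub>1])
qed

lemma potential_ge_on_Aeps:
  fixes \<psi> \<psi>' :: "real \<Rightarrow> real"
  assumes deriv: "\<And>\<rho>. 0 < \<rho> \<Longrightarrow> (\<psi> has_real_derivative \<psi>' \<rho>) (at \<rho>)"
    and antimono: "\<And>s t. 0 < s \<Longrightarrow> s \<le> t \<Longrightarrow> \<psi>' t \<le> \<psi>' s"
    and mono: "mono_on {0<..} \<psi>" and R: "0 < R" and rm: "0 \<le> rm" and "0 \<le> \<epsilon>" "0 < M"
    and V\<^sub>0: "\<And>y. y \<in> (confD R rm rp :: ('d::finite, 'n::finite) config set) \<Longrightarrow> V\<^sub>0 \<le> potential \<psi> y"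
    and far: "V\<^sub>0 + 1 \<le> \<psi> M + (real CARD('n) - 1) * \<psi> R"
    and x: "x \<in> (Aeps R rm rp \<epsilon> :: ('d, 'n) config set)"
  shows "V\<^sub>0 + min 1 (\<epsilon> * \<psi>' M) \<le> potential \<psi> x"
proof -
  from x obtain y k where x: "x \<in> confD R rm rp" and y: "y \<in> confD R rm rp"
    and same: "\<And>i. i \<noteq> k \<Longrightarrow> pos y i = pos x i" and lt: "norm (pos y k) < norm (pos x k) - \<epsilon>"
    unfolding Aeps_def by blast
  show ?thesis
  proof (cases "M \<le> norm (pos x k)")
    case True
    then have "\<psi> M \<le> \<psi> (norm (pos x k))" using \<open>0 < M\<close> by (intro mono_onD[OF mono]) auto
    then show ?thesis using potential_ge_single[OF mono R rm x, of k] far by linarith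
  next
    case False
    have "(\<Sum>i\<in>UNIV - {k}. \<psi> (norm (pos y i))) = (\<Sum>i\<in>UNIV - {k}. \<psi> (norm (pos x i)))"
      using same by (intro sum.cong) auto
    then have diff: "potential \<psi> x - potential \<psi> y = \<psi> (norm (pos x k)) - \<psi> (norm (pos y k))"
      using potential_split[of \<psi> x k] potential_split[of \<psi> y k] by simp
    have "R < norm (pos y k)" using norm_pos_gt_if_confD[OF y rm] .
    then have a: "0 < norm (pos x k) - \<epsilon>" "norm (pos x k) - \<epsilon> \<le> norm (pos x k)"
      using lt R \<open>0 \<le> \<epsilon>\<close> by linarith+
    have "\<psi> (norm (pos y k)) \<le> \<psi> (norm (pos x k) - \<epsilon>)"
      using lt R \<open>R < norm (pos y k)\<close> by (intro mono_onD[OF mono]) auto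
    moreover have "\<epsilon> * \<psi>' (norm (pos x k)) \<le> \<psi> (norm (pos x k)) - \<psi> (norm (pos x k) - \<epsilon>)"
      using secant_ge_deriv_right[OF deriv antimono a] by simp
    moreover have "\<epsilon> * \<psi>' M \<le> \<epsilon> * \<psi>' (norm (pos x k))"
    proof -
      have "0 < norm (pos x k)" using a by linarith
      then have "\<psi>' M \<le> \<psi>' (norm (pos x k))" using antimono False by simp
      then show ?thesis using \<open>0 \<le> \<epsilon>\<close> by (rule mult_left_mono)
    qed
    ultimately show ?thesis using V\<^sub>0[OF y] diff by linarith
  qed
qed

lemma potential_gap_on_Aeps:
  fixes \<psi> \<psi>' :: "real \<Rightarrow> real"
  assumes deriv: "\<And>\<rho>. 0 < \<rho> \<Longrightarrow> (\<psi> has_real_derivative \<psi>' \<rho>) (at \<rho>)"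
    and antimono: "\<And>s t. 0 < s \<Longrightarrow> s \<le> t \<Longrightarrow> \<psi>' t \<le> \<psi>' s"
    and mono: "mono_on {0<..} \<psi>" and R: "0 < R" and rm: "0 \<le> rm" and \<epsilon>: "0 < \<epsilon>"
    and c: "0 < c" and x\<^sub>0: "0 < x\<^sub>0" and deriv_ge: "\<And>t. x\<^sub>0 \<le> t \<Longrightarrow> c \<le> t * \<psi>' t"
    and growth: "\<And>t. x\<^sub>0 \<le> t \<Longrightarrow> \<psi> x\<^sub>0 + c * ln (t / x\<^sub>0) \<le> \<psi> t"
    and V\<^sub>0: "\<And>y. y \<in> (confD R rm rp :: ('d::finite, 'n::finite) config set) \<Longrightarrow> V\<^sub>0 \<le> potential \<psi> y"
  obtains \<eta> where "0 < \<eta>" "\<And>x. x \<in> (Aeps R rm rp \<epsilon> :: ('d, 'n) config set) \<Longrightarrow> V\<^sub>0 + \<eta> \<le> potential \<psi> x"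
proof -
  define B where "B = V\<^sub>0 + 1 - (real CARD('n) - 1) * \<psi> R"
  \<comment> \<open>large enough that the logarithmic growth of \<open>\<psi>\<close> forces \<open>B \<le> \<psi> M\<close>\<close>
  define M where "M = x\<^sub>0 * exp (\<bar>B - \<psi> x\<^sub>0\<bar> / c)"
  have M: "x\<^sub>0 \<le> M" using x\<^sub>0 c by (simp add: M_def)
  have "ln (M / x\<^sub>0) = \<bar>B - \<psi> x\<^sub>0\<bar> / c" using x\<^sub>0 by (simp add: M_def)
  then have "B \<le> \<psi> M" using growth[OF M] c by simp
  then have far: "V\<^sub>0 + 1 \<le> \<psi> M + (real CARD('n) - 1) * \<psi> R" by (simp add: B_def)
  have "0 < M * \<psi>' M" using deriv_ge[OF M] c by linarith
  then have "0 < \<psi>' M" using M x\<^sub>0 by (simp add: zero_less_mult_iff)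
  then show ?thesis
    using potential_ge_on_Aeps[OF deriv antimono mono R rm _ _ V\<^sub>0 far] \<epsilon> M x\<^sub>0
    by (intro that[of "min 1 (\<epsilon> * \<psi>' M)"]) auto
qed

theorem proposition3:
  fixes \<psi> \<psi>' \<psi>'' :: "real \<Rightarrow> real" and R rm rp \<epsilon> :: real
  assumes "R > 0" and "0 < rm" and "rm < rp"
    and "\<And>\<rho>. \<rho> > 0 \<Longrightarrow> (\<psi> has_real_derivative \<psi>' \<rho>) (at \<rho>)"
    and "\<And>\<rho>. \<rho> > 0 \<Longrightarrow> (\<psi>' has_real_derivative \<psi>'' \<rho>) (at \<rho>)"
    and "continuous_on {0<..} \<psi>''"
    and "strict_mono_on {0<..} \<psi>"
    and "\<And>\<rho>. \<rho> > 0 \<Longrightarrow> \<psi>'' \<rho> \<le> 0"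
    and "Liminf at_top (\<lambda>\<rho>. ereal (\<rho> * \<psi>' \<rho>)) > 0"
    and "\<epsilon> > 0"
  shows "(\<forall>\<^sub>F \<theta> in at_right 0.
            wint \<psi> \<theta> (confD R rm rp :: ('d::finite, 'n::finite) config set) < \<infinity>)
         \<and> ((\<lambda>\<theta>. mu \<psi> R rm rp \<theta> (Aeps R rm rp \<epsilon> :: ('d, 'n) config set))
              \<longlongrightarrow> 0) (at_right 0)"
proof -
  note R = assms(1) and rm = less_imp_le[OF assms(2)] and deriv = assms(4)
  let ?D = "confD R rm rp :: ('d, 'n) config set"
  let ?A = "Aeps R rm rp \<epsilon> :: ('d, 'n) config set"
  have mono: "mono_on {0<..} \<psi>" using assms(7) by (rule strict_mono_on_imp_mono_on)
  have cont: "continuous_on {0<..} \<psi>"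
    using deriv by (intro continuous_at_imp_continuous_on) (auto intro: DERIV_isCont)
  have cont_potential: "continuous_on ?D (potential \<psi>)"
    using continuous_on_potential[OF cont less_imp_le[OF R] rm] .
  have antimono: "\<psi>' t \<le> \<psi>' s" if "0 < s" "s \<le> t" for s t
    using that assms(5,8) by (intro deriv_nonpos_imp_antimono[of s t \<psi>' \<psi>'']) auto
  obtain c x\<^sub>0 where c: "0 < c" "0 < x\<^sub>0" "\<And>t. x\<^sub>0 \<le> t \<Longrightarrow> c \<le> t * \<psi>' t"
    and growth: "\<And>t. x\<^sub>0 \<le> t \<Longrightarrow> \<psi> x\<^sub>0 + c * ln (t / x\<^sub>0) \<le> \<psi> t"
    using log_growth_if_Liminf_pos[OF deriv assms(9)] by blast
  have finite: "\<forall>\<^sub>F \<theta> in at_right 0. gibbs_mass (potential \<psi>) \<theta> ?D < \<infinity>"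
    using gibbs_mass_confD_finite[OF mono cont R rm c(1,2) growth] .
  have "Inf (potential \<psi> ` ?D) \<le> potential \<psi> y" if "y \<in> ?D" for y
    using potential_ge[OF mono R rm] that by (intro cInf_lower) (auto simp: bdd_below_def)
  then obtain \<eta> where "0 < \<eta>" "\<And>x. x \<in> ?A \<Longrightarrow> Inf (potential \<psi> ` ?D) + \<eta> \<le> potential \<psi> x"
    using potential_gap_on_Aeps[OF deriv antimono mono R rm assms(10) c growth] by metis
  moreover have "?A \<subseteq> ?D" by (auto simp: Aeps_def)
  ultimately have "((\<lambda>\<theta>. enn2real (gibbs_mass (potential \<psi>) \<theta> ?A) / enn2real (gibbs_mass (potential \<psi>) \<theta> ?D))
      \<longlongrightarrow> 0) (at_right 0)"
    using gibbs_ratio_tendsto_zero[OF open_confD confD_nonempty[OF assms(3)] cont_potential finite] by blast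
  with finite \<open>?A \<subseteq> ?D\<close> show ?thesis
    by (simp add: mu_def wint_eq_gibbs_mass Int_absorb2)
qed

end
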